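(* $\mathrm{GL}_4(\mathbb{F}_3)$ does not contain a subgroup isomorphic to $A_5\times V_4$.
   Context: $V_4\cong C_2\times C_2$ is the Klein four-group. *)

theory Defs
  imports "HOL-Analysis.Analysis" "HOL-Algebra.Algebra"
begin

text \<open>The field F_3 is represented by the numeral type 3 (integers mod 3, HOL-Library.Numeral_Type);
  4 x 4 matrices over it are elements of type 3^4^4. GL_4(F_3) is the group of invertible matrices
  under matrix multiplication.\<close>

definition GL4_F3 :: "(3^4^4) monoid" where
  "GL4_F3 = \<lparr>carrier = {A :: 3^4^4. invertible A}, mult = (**), one = mat 1\<rparr>"

definition V4 :: "(int \<times> int) monoid" where
  "V4 = DirProd (integer_mod_group 2) (integer_mod_group 2)"

definition A5_times_V4 :: "((nat \<Rightarrow> nat) \<times> (int \<times> int)) monoid" where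
  "A5_times_V4 = DirProd (alt_group 5) V4"

end

(*
  An element g of order 5 in GL_4(F_3) permutes the 81 vectors of F_3^4, and every vector it does
  not fix lies in an orbit of size 5. So its fixed space, a subgroup of order 3^i, has size
  congruent to 81 = 1 (mod 5); as 3^i = 1 (mod 5) only for i = 0, 4 and g is not the identity,
  g fixes only 0. If t is an involution commuting with g, the fixed space of t is g-stable and
  its nonzero vectors again fall into 5-orbits, so it is trivial too; since v + t v is fixed by t,
  t = -1. Hence an element of order 5 of GL_4(F_3) commutes with at most one involution, whereas
  in A_5 x V_4 a 5-cycle commutes with the three involutions of V_4.
*)
theory Submission
  imports Defs "HOL-Combinatorics.Orbits" "HOL-Number_Theory.Pocklington"
begin

hide_const (open) Divisibility.prime Measure_Space.additive

lemma funpow_prime_period_fixed: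
  assumes "prime p" "(f ^^ p) x = x" "(f ^^ k) x = x" "0 < k" "k < p"
  shows "f x = x"
proof -
  have "coprime k p"
    using assms prime_imp_coprime[of p k] by (simp add: coprime_commute nat_dvd_not_less)
  then obtain m where m: "[k * m = 1] (mod p)"
    using cong_solve_coprime_nat by auto
  have "(f ^^ (k * m)) x = x"
    using funpow_mod_eq[where n = k and m = "k * m", OF assms(3)] by simp
  moreover have "(k * m) mod p = 1"
    using m prime_gt_1_nat[OF assms(1)] by (simp add: cong_def)
  ultimately show ?thesis
    using funpow_mod_eq[where n = p and m = "k * m", OF assms(2)] by simp
qed

lemma inj_on_funpow_prime_period:
  assumes "prime p" "(f ^^ p) x = x" "f x \<noteq> x"
  shows "inj_on (\<lambda>n. (f ^^ n) x) {..<p}"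
proof (rule linorder_inj_onI')
  fix i j assume "i \<in> {..<p}" "j \<in> {..<p}" "i < j"
  have apply_add: "(f ^^ a) ((f ^^ b) x) = (f ^^ (a + b)) x" for a b
    by (simp add: funpow_add)
  show "(f ^^ i) x \<noteq> (f ^^ j) x"
  proof
    assume eq: "(f ^^ i) x = (f ^^ j) x"
    have "x = (f ^^ (p - i)) ((f ^^ i) x)"
      using assms(2) \<open>i < j\<close> \<open>j \<in> _\<close> by (simp add: apply_add)
    also have "\<dots> = (f ^^ (j - i)) ((f ^^ p) x)"
      using \<open>i < j\<close> \<open>j \<in> _\<close> by (simp add: eq apply_add add.commute)
    finally have "(f ^^ (j - i)) x = x"
      using assms(2) by simp
    moreover have "0 < j - i" "j - i < p"
      using \<open>i < j\<close> \<open>j \<in> _\<close> by auto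
    ultimately show False
      using funpow_prime_period_fixed[OF assms(1,2)] assms(3) by blast
  qed
qed

lemma prime_dvd_card_if_fixpoint_free:
  assumes "prime p" "finite S" "f ` S \<subseteq> S"
    and period: "\<And>x. x \<in> S \<Longrightarrow> (f ^^ p) x = x"
    and fixpoint_free: "\<And>x. x \<in> S \<Longrightarrow> f x \<noteq> x"
  shows "p dvd card S"
proof -
  have "0 < p" using assms(1) by (simp add: prime_gt_0_nat)
  have orbit_eq: "orbit f x = (\<lambda>n. (f ^^ n) x) ` {..<p}" if "x \<in> S" for x
    using orbit_altdef_bounded[OF period[OF that] \<open>0 < p\<close>] by auto
  have self_in_orbit: "x \<in> orbit f x" if "x \<in> S" for x
    using orbit_eq[OF that] \<open>0 < p\<close> by force
  have orbit_of_member: "orbit f y = orbit f x" if "x \<in> S" "y \<in> orbit f x" for x y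
    using that self_in_orbit by (blast intro: orbit_trans orbit_swap)
  have card_orbit: "card (orbit f x) = p" if "x \<in> S" for x
    using orbit_eq[OF that] inj_on_funpow_prime_period[OF assms(1) period fixpoint_free] that
    by (simp add: card_image)
  have orbits_cover: "\<Union> (orbit f ` S) = S"
  proof
    show "\<Union> (orbit f ` S) \<subseteq> S"
    proof (clarsimp simp: orbit_eq)
      show "(f ^^ n) x \<in> S" if "x \<in> S" for n x
        using that assms(3) by (induction n) auto
    qed
  qed (use self_in_orbit in blast)
  have "p * card (orbit f ` S) = card (\<Union> (orbit f ` S))"
  proof (rule card_partition)
    show "c1 \<inter> c2 = {}" if "c1 \<in> orbit f ` S" "c2 \<in> orbit f ` S" "c1 \<noteq> c2" for c1 c2
      using that orbit_of_member by blast
  qed (use assms(2) orbits_cover card_orbit in auto)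
  then show ?thesis
    using orbits_cover by (metis dvd_triv_left)
qed

lemma card_fixed_points_dvd_card:
  fixes t :: "'a::{finite,ab_group_add} \<Rightarrow> 'a"
  assumes "additive t"
  shows "card {v. t v = v} dvd CARD('a)"
proof -
  let ?V = "\<lparr>carrier = UNIV, mult = (+), one = 0\<rparr> :: 'a monoid"
  interpret group ?V
    by (rule groupI) (auto simp: add.assoc intro: exI[where x = "- x" for x])
  have inv_eq: "inv\<^bsub>?V\<^esub> v = - v" for v
    by (rule inv_equality) auto
  have "subgroup {v. t v = v} ?V"
    by (rule subgroupI)
      (auto simp: inv_eq additive.zero[OF assms] additive.add[OF assms] additive.minus[OF assms]
        intro: exI[where x = 0])
  then have "card (rcosets\<^bsub>?V\<^esub> {v. t v = v}) * card {v. t v = v} = CARD('a)"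
    using lagrange unfolding order_def by simp
  then show ?thesis
    by (metis dvd_triv_right)
qed

lemma fixed_points_eq_zero_or_id:
  fixes t :: "'a::{finite,ab_group_add} \<Rightarrow> 'a"
  assumes "prime p" "CARD('a) = p ^ ord q p" "additive t"
    and "[card {v. t v = v} = 1] (mod q)"
  shows "{v. t v = v} = {0} \<or> t = id"
proof -
  let ?W = "{v. t v = v}"
  obtain i where "i \<le> ord q p" and card_W: "card ?W = p ^ i"
    using card_fixed_points_dvd_card[OF assms(3)] assms(1,2) by (auto simp: divides_primepow_nat)
  then have "ord q p dvd i"
    using assms(4) by (metis ord_divides)
  with \<open>i \<le> ord q p\<close> have "i = 0 \<or> i = ord q p"
    by (auto dest: dvd_imp_le)
  then show ?thesis
  proof
    assume "i = 0"
    moreover have "0 \<in> ?W"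
      by (simp add: additive.zero[OF assms(3)])
    ultimately show ?thesis
      using card_W by (metis card_1_singletonE power_0 singletonD)
  next
    assume "i = ord q p"
    then have "?W = UNIV"
      using card_W assms(2) by (intro card_eq_UNIV_imp_eq_UNIV) simp_all
    then have "t = id"
      by (auto simp: fun_eq_iff)
    then show ?thesis ..
  qed
qed

text \<open>The hypothesis on CARD('a), met by the vectors of length ord q p over the prime field of
  order p, makes 1 and CARD('a) the only orders of subgroups that are congruent to 1 modulo q.\<close>
locale prime_order_additive_map =
  fixes p q :: nat and f :: "'a::{finite,ab_group_add} \<Rightarrow> 'a"
  assumes prime_p: "prime p" and prime_q: "prime q"
    and card_UNIV: "CARD('a) = p ^ ord q p"
    and additive: "additive f"
    and order: "f ^^ q = id"
    and nontrivial: "f \<noteq> id"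
begin

lemma fixed_if_image_fixed:
  assumes "f (f x) = f x"
  shows "f x = x"
proof -
  have "(f ^^ n) (f x) = f x" for n
    using assms by (induction n) simp_all
  moreover have "q = Suc (q - 1)"
    using prime_gt_0_nat[OF prime_q] by simp
  ultimately have "(f ^^ q) x = f x"
    by (metis funpow_Suc_right o_apply)
  then show ?thesis
    using order by simp
qed

lemma q_dvd_card_if_invariant_fixpoint_free:
  assumes "f ` S \<subseteq> S" "\<And>x. x \<in> S \<Longrightarrow> f x \<noteq> x"
  shows "q dvd card S"
  by (rule prime_dvd_card_if_fixpoint_free[OF prime_q]) (use assms order in auto)

lemma fixed_point_eq_0:
  assumes "f v = v"
  shows "v = 0"
proof -
  let ?W = "{v. f v = v}"
  have "q dvd card (- ?W)"
    by (rule q_dvd_card_if_invariant_fixpoint_free) (auto dest: fixed_if_image_fixed)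
  then have "[card ?W = card ?W + card (- ?W)] (mod q)"
    by (metis cong_add_lcancel_0_nat cong_0_iff cong_sym)
  also have "card ?W + card (- ?W) = p ^ ord q p"
    using card_UNIV by (subst card_Un_disjoint[symmetric]) auto
  also have "[p ^ ord q p = 1] (mod q)"
    by (rule ord)
  finally have "?W = {0}"
    using fixed_points_eq_zero_or_id[OF prime_p card_UNIV additive] nontrivial by blast
  with assms show ?thesis
    by auto
qed

lemma commuting_involution_eq_uminus:
  fixes t :: "'a \<Rightarrow> 'a"
  assumes "additive t" "t \<circ> t = id" "t \<noteq> id" "t \<circ> f = f \<circ> t"
  shows "t = uminus"
proof -
  let ?E = "{v. t v = v}"
  have f_nonzero: "f x \<noteq> 0" if "x \<noteq> 0" for x
    using that fixed_if_image_fixed[of x] fixed_point_eq_0[of x] additive.zero[OF additive]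
    by force
  have "q dvd card (?E - {0})"
  proof (rule q_dvd_card_if_invariant_fixpoint_free)
    show "f ` (?E - {0}) \<subseteq> ?E - {0}"
      using f_nonzero fun_cong[OF assms(4)] by auto
  qed (auto dest: fixed_point_eq_0)
  then have "[card (?E - {0}) + 1 = 0 + 1] (mod q)"
    by (simp only: cong_add_rcancel_nat cong_0_iff)
  moreover have "card ?E = card (?E - {0}) + 1"
    using additive.zero[OF assms(1)] card.remove[of ?E 0] by simp
  ultimately have "[card ?E = 1] (mod q)"
    by simp
  then have E: "?E = {0}"
    using fixed_points_eq_zero_or_id[OF prime_p card_UNIV assms(1)] assms(3) by blast
  show ?thesis
  proof
    fix v
    have "t (v + t v) = v + t v"
      using fun_cong[OF assms(2), of v] by (simp add: additive.add[OF assms(1)] add.commute)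
    then have "v + t v = 0"
      using E by blast
    then show "t v = - v"
      by (simp add: add_eq_0_iff)
  qed
qed

end

lemma group_GL4_F3: "group GL4_F3"
proof (rule groupI)
  show "\<one>\<^bsub>GL4_F3\<^esub> \<in> carrier GL4_F3"
    by (auto simp: GL4_F3_def invertible_def intro: exI[where x = "mat 1"])
  show "A \<otimes>\<^bsub>GL4_F3\<^esub> B \<in> carrier GL4_F3" if "A \<in> carrier GL4_F3" "B \<in> carrier GL4_F3" for A B
    using that by (simp add: GL4_F3_def invertible_mult)
  show "\<exists>B \<in> carrier GL4_F3. B \<otimes>\<^bsub>GL4_F3\<^esub> A = \<one>\<^bsub>GL4_F3\<^esub>" if "A \<in> carrier GL4_F3" for A
  proof -
    have "invertible A"
      using that by (simp add: GL4_F3_def)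
    then obtain B where "A ** B = mat 1" "B ** A = mat 1"
      unfolding invertible_def by blast
    then show ?thesis
      by (auto simp: GL4_F3_def invertible_def)
  qed
qed (simp_all add: GL4_F3_def matrix_mul_assoc)

lemma additive_matrix_vector_mult:
  fixes A :: "'a::ring_1 ^ 'n ^ 'm"
  shows "additive ((*v) A)"
  by (rule additive.intro) (rule matrix_vector_right_distrib)

lemma GL4_F3_nat_pow_mult_vec: "(g [^]\<^bsub>GL4_F3\<^esub> (n::nat)) *v v = ((*v) g ^^ n) v"
  by (induction n arbitrary: v) (simp_all add: GL4_F3_def funpow_swap1 flip: matrix_vector_mul_assoc)

lemma ord_5_3: "ord 5 (3::nat) = 4"
proof -
  have "ord 5 (3::nat) dvd 4"
    by (simp add: ord_divides[symmetric] cong_def)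
  moreover have "\<not> ord 5 (3::nat) dvd 2"
    by (simp add: ord_divides[symmetric] cong_def)
  moreover have "ord 5 (3::nat) \<in> {..4}"
    using dvd_imp_le[OF \<open>ord 5 3 dvd 4\<close>] by simp
  ultimately show ?thesis
    by (auto simp: atMost_nat_numeral le_Suc_eq)
qed

definition involutions_centralizing :: "('a, 'b) monoid_scheme \<Rightarrow> 'a \<Rightarrow> 'a set" where
  "involutions_centralizing G x =
    {y \<in> carrier G. y \<otimes>\<^bsub>G\<^esub> y = \<one>\<^bsub>G\<^esub> \<and> y \<noteq> \<one>\<^bsub>G\<^esub> \<and> y \<otimes>\<^bsub>G\<^esub> x = x \<otimes>\<^bsub>G\<^esub> y}"

lemma (in group_hom) image_involutions_centralizing:
  assumes "inj_on h (carrier G)" "x \<in> carrier G"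
  shows "h ` involutions_centralizing G x \<subseteq> involutions_centralizing H (h x)"
proof (rule image_subsetI)
  fix y assume "y \<in> involutions_centralizing G x"
  then have y: "y \<in> carrier G" "y \<otimes>\<^bsub>G\<^esub> y = \<one>\<^bsub>G\<^esub>" "y \<noteq> \<one>\<^bsub>G\<^esub>" "y \<otimes>\<^bsub>G\<^esub> x = x \<otimes>\<^bsub>G\<^esub> y"
    by (auto simp: involutions_centralizing_def)
  have "h y \<otimes>\<^bsub>H\<^esub> h y = \<one>\<^bsub>H\<^esub>" "h y \<otimes>\<^bsub>H\<^esub> h x = h x \<otimes>\<^bsub>H\<^esub> h y"
    using y assms(2) by (metis hom_mult hom_one)+
  moreover have "h y \<noteq> \<one>\<^bsub>H\<^esub>"
    using y assms(1) by (metis hom_one inj_on_contraD G.one_closed)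
  ultimately show "h y \<in> involutions_centralizing H (h x)"
    using y(1) by (simp add: involutions_centralizing_def)
qed

lemma (in group) injective_hom_of_iso_subgroup:
  assumes "subgroup H G" "G\<lparr>carrier := H\<rparr> \<cong> K"
  obtains h where "h \<in> hom K G" "inj_on h (carrier K)"
proof -
  have "K \<cong> G\<lparr>carrier := H\<rparr>"
    using group.iso_sym[OF subgroup_imp_group[OF assms(1)] assms(2)] .
  then obtain h where "h \<in> iso K (G\<lparr>carrier := H\<rparr>)"
    by (auto simp: is_iso_def)
  then have "h \<in> hom K G" "inj_on h (carrier K)"
    using subgroup.subset[OF assms(1)] by (auto simp: iso_def hom_def bij_betw_def)
  then show thesis
    by (rule that)
qed

lemma DirProd_nat_pow:
  "(a, b) [^]\<^bsub>G \<times>\<times> H\<^esub> (n::nat) = (a [^]\<^bsub>G\<^esub> n, b [^]\<^bsub>H\<^esub> n)"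
  by (induction n) simp_all

lemma alt_group_nat_pow: "p [^]\<^bsub>alt_group m\<^esub> (n::nat) = p ^^ n"
  by (induction n) (simp_all add: alt_group_mult alt_group_one comp_def funpow_swap1)

lemma GL4_F3_involutions_centralizing_order_5:
  assumes "g [^]\<^bsub>GL4_F3\<^esub> (5::nat) = \<one>\<^bsub>GL4_F3\<^esub>" "g \<noteq> \<one>\<^bsub>GL4_F3\<^esub>"
  shows "involutions_centralizing GL4_F3 g \<subseteq> {- mat 1}"
proof
  fix s assume "s \<in> involutions_centralizing GL4_F3 g"
  then have s: "s ** s = mat 1" "s \<noteq> mat 1" "s ** g = g ** s"
    by (simp_all add: involutions_centralizing_def GL4_F3_def)
  have matrix_eq_iff: "A = B \<longleftrightarrow> (*v) A = (*v) B" for A B :: "3^4^4"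
    by (simp add: matrix_eq fun_eq_iff)
  have action_mult: "(*v) (A ** B) = (*v) A \<circ> (*v) B" for A B :: "3^4^4"
    by (simp add: fun_eq_iff matrix_vector_mul_assoc)
  have action_one: "(*v) (mat 1 :: 3^4^4) = id"
    by (simp add: fun_eq_iff)
  interpret prime_order_additive_map 3 5 "(*v) g"
  proof
    have "CARD(3^4) = (81::nat)"
      by simp
    also have "\<dots> = 3 ^ ord 5 (3::nat)"
      by (simp add: ord_5_3)
    finally show "CARD(3^4) = 3 ^ ord 5 (3::nat)" .
    show "(*v) g ^^ 5 = id"
      using assms(1) by (simp add: fun_eq_iff flip: GL4_F3_nat_pow_mult_vec) (simp add: GL4_F3_def)
    show "(*v) g \<noteq> id"
      using assms(2) by (simp add: matrix_eq_iff GL4_F3_def action_one)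
  qed (simp_all add: matrix_vector_right_distrib)
  have "(*v) s = uminus"
  proof (rule commuting_involution_eq_uminus)
    show "(*v) s \<circ> (*v) s = id" "(*v) s \<noteq> id" "(*v) s \<circ> (*v) g = (*v) g \<circ> (*v) s"
      using s by (simp_all add: matrix_eq_iff action_mult action_one)
  qed (rule additive_matrix_vector_mult)
  moreover have "(- mat 1) *v v = - v" for v :: "3^4"
    using matrix_vector_mult_diff_rdistrib[of 0 "mat 1" v] by simp
  ultimately show "s \<in> {- mat 1}"
    by (simp add: matrix_eq_iff fun_eq_iff)
qed

lemma group_V4: "group V4"
  unfolding V4_def by (intro DirProd_group group_integer_mod_group)

lemma group_A5_times_V4: "group A5_times_V4"
  unfolding A5_times_V4_def by (intro DirProd_group alt_group_is_group group_V4)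

lemma A5_times_V4_involutions_centralizing_order_5:
  obtains x y1 y2 where "x \<in> carrier A5_times_V4"
    "x [^]\<^bsub>A5_times_V4\<^esub> (5::nat) = \<one>\<^bsub>A5_times_V4\<^esub>" "x \<noteq> \<one>\<^bsub>A5_times_V4\<^esub>"
    "y1 \<in> involutions_centralizing A5_times_V4 x" "y2 \<in> involutions_centralizing A5_times_V4 x"
    "y1 \<noteq> y2"
proof
  let ?\<sigma> = "cycle_of_list [1, 2, 3, 4, 5 :: nat]"
  have "set [1, 2, 3, 4, 5] = {1..5 :: nat}"
    by auto
  then have "?\<sigma> permutes {1..5}"
    using cycle_permutes[of "[1, 2, 3, 4, 5 :: nat]"] by simp
  moreover have "evenperm ?\<sigma>"
    by (simp add: evenperm_comp permutation_compose permutation_swap_id evenperm_swap)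
  ultimately show "(?\<sigma>, 0, 0) \<in> carrier A5_times_V4"
    by (simp add: A5_times_V4_def V4_def alt_group_carrier carrier_integer_mod_group)
  have "?\<sigma> ^^ 5 = id"
    using cycle_is_id_root[of "[1, 2, 3, 4, 5 :: nat]"]
    by (simp add: numeral_eq_Suc del: cycle_of_list.simps)
  moreover have "(0::int, 0::int) [^]\<^bsub>V4\<^esub> (5::nat) = \<one>\<^bsub>V4\<^esub>"
    using monoid.nat_pow_one[OF group.is_monoid[OF group_V4]] by (simp add: V4_def)
  ultimately show "(?\<sigma>, 0, 0) [^]\<^bsub>A5_times_V4\<^esub> (5::nat) = \<one>\<^bsub>A5_times_V4\<^esub>"
    by (simp add: A5_times_V4_def DirProd_nat_pow alt_group_nat_pow alt_group_one
        del: cycle_of_list.simps)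
  show "(?\<sigma>, 0, 0) \<noteq> \<one>\<^bsub>A5_times_V4\<^esub>"
    by (simp add: A5_times_V4_def V4_def alt_group_one fun_eq_iff exI[where x = 1])
  show "(id, 1, 0) \<in> involutions_centralizing A5_times_V4 (?\<sigma>, 0, 0)"
    "(id, 0, 1) \<in> involutions_centralizing A5_times_V4 (?\<sigma>, 0, 0)"
    by (auto simp: involutions_centralizing_def A5_times_V4_def V4_def alt_group_mult alt_group_one
        alt_group_carrier carrier_integer_mod_group)
qed simp

lemma no_injective_hom_A5_times_V4_to_GL4_F3:
  assumes hom: "group_hom A5_times_V4 GL4_F3 h" and inj: "inj_on h (carrier A5_times_V4)"
  shows False
proof -
  obtain x y1 y2 where x: "x \<in> carrier A5_times_V4"
      "x [^]\<^bsub>A5_times_V4\<^esub> (5::nat) = \<one>\<^bsub>A5_times_V4\<^esub>" "x \<noteq> \<one>\<^bsub>A5_times_V4\<^esub>"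
    and y: "y1 \<in> involutions_centralizing A5_times_V4 x" "y2 \<in> involutions_centralizing A5_times_V4 x"
      "y1 \<noteq> y2"
    by (rule A5_times_V4_involutions_centralizing_order_5)
  have "h x [^]\<^bsub>GL4_F3\<^esub> (5::nat) = \<one>\<^bsub>GL4_F3\<^esub>"
    using group_hom.hom_nat_pow[OF hom x(1), of 5] x(2) by (simp add: group_hom.hom_one[OF hom])
  moreover have "h x \<noteq> \<one>\<^bsub>GL4_F3\<^esub>"
    using inj_on_contraD[OF inj x(3) x(1)] group_hom.hom_one[OF hom]
      monoid.one_closed[OF group.is_monoid[OF group_A5_times_V4]]
    by simp
  ultimately have "involutions_centralizing GL4_F3 (h x) \<subseteq> {- mat 1}"
    by (rule GL4_F3_involutions_centralizing_order_5)
  with group_hom.image_involutions_centralizing[OF hom inj x(1)]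
  have "\<forall>y \<in> involutions_centralizing A5_times_V4 x. h y = - mat 1"
    by (simp add: image_subset_iff subset_iff)
  then have "h y1 = h y2"
    using y(1,2) by simp
  moreover have "y1 \<in> carrier A5_times_V4" "y2 \<in> carrier A5_times_V4"
    using y(1,2) by (simp_all add: involutions_centralizing_def)
  ultimately show False
    using inj_onD[OF inj] y(3) by blast
qed

theorem lemma3p15:
  shows "\<not> (\<exists>H. subgroup H GL4_F3 \<and> GL4_F3\<lparr>carrier := H\<rparr> \<cong> A5_times_V4)"
proof
  assume "\<exists>H. subgroup H GL4_F3 \<and> GL4_F3\<lparr>carrier := H\<rparr> \<cong> A5_times_V4"
  then obtain H where "subgroup H GL4_F3" "GL4_F3\<lparr>carrier := H\<rparr> \<cong> A5_times_V4"
    by blast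
  then obtain h where h: "h \<in> hom A5_times_V4 GL4_F3" and inj: "inj_on h (carrier A5_times_V4)"
    by (rule group.injective_hom_of_iso_subgroup[OF group_GL4_F3])
  have "group_hom A5_times_V4 GL4_F3 h"
    unfolding group_hom_def group_hom_axioms_def using h group_A5_times_V4 group_GL4_F3 by blast
  then show False
    using inj by (rule no_injective_hom_A5_times_V4_to_GL4_F3)
qed

end
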